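(* Let $\alpha,\beta,\gamma$ be words over $X$ such that $\alpha\beta\gamma$ has no repeated letters, and let $x$ be a letter of $\beta$. Then $$f[\alpha\beta]\,f[\alpha\gamma]=\sum_{y}s(\beta,xy)\,f[(\alpha\beta)\setminus xy]\,f[\alpha\gamma xy]\;+\;\sum_{y\text{ a letter of }\gamma}s(\beta,x)\,s(\gamma,y)\,f[\alpha\,y\,(\beta\setminus x)]\,f[\alpha\,x\,(\gamma\setminus y)].$$ In the first sum only the letters $y\neq x$ of $\beta$ contribute. Pfaffians of odd-length words are $0$ by convention.
   Context: Setting. Let $X$ be a set and $R$ a commutative ring. Let $f$ assign to each ordered pair $(x,y)\in X\times X$ an element $f[xy]\in R$, subject to $f[xy]=-f[yx]$ and $f[xx]=0$ for all $x,y\in X$. Words. A word is a finite sequence of elements (letters) of $X$. Concatenation is written by juxtaposition, $\epsilon$ is the empty word, and $|\alpha|$ is the length of $\alpha$. For words $\alpha,\beta$, the word $\alpha\setminus\beta$ is obtained from $\alpha$ by deleting every letter that occurs in $\beta$. Sign. For words $\alpha,\beta$, set $s(\alpha,\beta)=0$ if $\alpha$ or $\beta$ has a repeated letter, or if $\beta$ contains a letter not in $\alpha$. Otherwise $s(\alpha,\beta)\in\{\pm1\}$ is the sign of the permutation that rearranges $\alpha$ into the word $\beta(\alpha\setminus\beta)$. In particular, $s(\beta,x)=(-1)^{i-1}$ if $x$ is the $i$-th letter of $\beta$. Pfaffian. Let $\alpha=x_1\ldots x_{2n}$ be a word with distinct letters. Then $$f[\alpha]=\sum s(\alpha,y_1\ldots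 y_{2n})\,f[y_1y_2]\cdots f[y_{2n-1}y_{2n}],$$ where the sum is over the $(2n-1)(2n-3)\cdots1$ partitions of $\{x_1,\ldots,x_{2n}\}$ into pairs $\{y_1,y_2\},\ldots,\{y_{2n-1},y_{2n}\}$. Each term does not depend on the order in which the pairs or their elements are listed. Further conventions: $f[\epsilon]=1$; $f[\alpha]=0$ if $\alpha$ has a repeated letter; and $f[\alpha]=0$ if $|\alpha|$ is odd. *)

theory Defs
  imports "HOL-Combinatorics.Permutations"
begin

text \<open>Words are lists over the alphabet 'a. alpha \ beta deletes from alpha every letter occurring in beta.\<close>
definition wdel :: "'a list \<Rightarrow> 'a list \<Rightarrow> 'a list" where
  "wdel a b = filter (\<lambda>z. z \<notin> set b) a"

text \<open>Sign of the permutation rearranging the distinct word a into the word c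
  (a permutation of a): c ! i = a ! (p i) for i below the length.\<close>
definition rearr_sign :: "'a list \<Rightarrow> 'a list \<Rightarrow> int" where
  "rearr_sign a c = sign (\<lambda>i. if i < length a then (THE j. j < length a \<and> a ! j = c ! i) else i)"

definition ssign :: "'a list \<Rightarrow> 'a list \<Rightarrow> int" where
  "ssign a b = (if distinct a \<and> distinct b \<and> set b \<subseteq> set a
                then rearr_sign a (b @ wdel a b) else 0)"

definition before :: "'a list \<Rightarrow> 'a \<Rightarrow> 'a \<Rightarrow> bool" where
  "before a x y = (\<exists>i j. i < j \<and> j < length a \<and> a ! i = x \<and> a ! j = y)"

text \<open>Canonical listings y1 ... y2n of the partitions of the letters of a into pairs:
  within each pair the first element comes first in a, and the pairs are listed
  by increasing position (in a) of their first elements. Each pair partition has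
  exactly one such listing.\<close>
definition pairings :: "'a list \<Rightarrow> 'a list set" where
  "pairings a = {ys. distinct ys \<and> set ys = set a \<and> length ys = length a \<and>
     (\<forall>i. 2*i+1 < length ys \<longrightarrow> before a (ys ! (2*i)) (ys ! (2*i+1))) \<and>
     (\<forall>i. 2*i+2 < length ys \<longrightarrow> before a (ys ! (2*i)) (ys ! (2*i+2)))}"

definition pf :: "('a \<Rightarrow> 'a \<Rightarrow> 'r::comm_ring_1) \<Rightarrow> 'a list \<Rightarrow> 'r" where
  "pf f a = (if distinct a \<and> even (length a) then
      (\<Sum>ys\<in>pairings a. of_int (ssign a ys) * (\<Prod>i<length a div 2. f (ys ! (2*i)) (ys ! (2*i+1))))
    else 0)"

end

theory Submission
  imports Defs
begin

text \<open>
  Relabelling the letters of \<alpha>\<beta>\<gamma> by their positions reduces the identity to a linearly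
  ordered alphabet on which \<alpha>\<beta>\<gamma> is increasing. Every word occurring in it is then, up to the
  sign of moving one or two letters, the increasing enumeration of its set of letters, and the
  identity becomes the instance S = (A \<union> B) - {x}, T = A \<union> C \<union> {x} (A, B, C the letters of
  \<alpha>, \<beta>, \<gamma>) of the Pfaffian Plucker relation
    \<Sum>i \<in> S \<triangle> T. \<plusminus> Pf(S \<triangle> {i}) Pf(T \<triangle> {i}) = 0,
  whose term for i = x is \<plusminus> Pf(A \<union> B) Pf(A \<union> C). The Plucker relation follows by induction
  on |S| + |T|: expanding every Pfaffian that contains a fixed u \<in> S - T along u and regrouping by
  the partner z of u leaves smaller Plucker sums, or pairs of cancelling terms.
\<close>

section \<open>Pfaffians by expansion along the first letter\<close>

primrec index :: "'a list \<Rightarrow> 'a \<Rightarrow> nat" where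
  "index [] x = 0"
| "index (y # ys) x = (if y = x then 0 else Suc (index ys x))"

lemma index_nth: "distinct xs \<Longrightarrow> i < length xs \<Longrightarrow> index xs (xs ! i) = i"
proof (induction xs arbitrary: i)
  case (Cons a xs) then show ?case by (cases i) (auto simp: nth_mem)
qed simp

lemma nth_index: "x \<in> set xs \<Longrightarrow> xs ! index xs x = x"
  by (induction xs) auto

lemma index_less_length: "x \<in> set xs \<Longrightarrow> index xs x < length xs"
  by (induction xs) auto

lemma index_append: "index (l @ r) z = (if z \<in> set l then index l z else length l + index r z)"
  by (induction l) auto

lemma inj_on_index: "inj_on (index xs) (set xs)"
  by (metis inj_onI nth_index)

lemma index_remove1:
  assumes "distinct w" "z \<in> set w" "v \<in> set w" "v \<noteq> z"
  shows "index (remove1 z w) v = (if index w z < index w v then index w v - 1 else index w v)"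
  using assms
proof (induction w)
  case (Cons a w)
  then show ?case
    using index_less_length[of z w] by (cases "a = z"; cases "a = v") auto
qed simp

lemma index_map: "inj_on h (set w) \<Longrightarrow> z \<in> set w \<Longrightarrow> index (map h w) (h z) = index w z"
  by (induction w) (auto simp: inj_on_def)

lemma remove1_map: "inj_on h (set w) \<Longrightarrow> z \<in> set w \<Longrightarrow> remove1 (h z) (map h w) = map h (remove1 z w)"
  by (induction w) (auto simp: inj_on_def)

function pfaff :: "('a \<Rightarrow> 'a \<Rightarrow> 'r::comm_ring_1) \<Rightarrow> 'a list \<Rightarrow> 'r" where
  "pfaff f [] = 1"
| "pfaff f (u # w) = (\<Sum>z\<in>set w. (-1) ^ index w z * f u z * pfaff f (remove1 z w))"
  by pat_completeness auto
termination
  by (relation "measure (\<lambda>(f, l). length l)") (auto simp: length_remove1)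

declare pfaff.simps(2)[simp del]

lemma pfaff_odd_length: "odd (length w) \<Longrightarrow> pfaff f w = 0"
proof (induction f w rule: pfaff.induct)
  case (2 f u w)
  have "pfaff f (remove1 z w) = 0" if "z \<in> set w" for z
  proof -
    have "odd (length (remove1 z w))" using 2(2) that by (cases w) (auto simp: length_remove1)
    then show ?thesis using 2(1)[OF that] by simp
  qed
  then show ?case by (simp add: pfaff.simps(2))
qed simp

lemma pfaff_map: "inj_on h (set w) \<Longrightarrow> pfaff f (map h w) = pfaff (\<lambda>u v. f (h u) (h v)) w"
proof (induction "\<lambda>u v. f (h u) (h v)" w rule: pfaff.induct)
  case (2 u w)
  have inj: "inj_on h (set w)" using 2 by auto
  have "pfaff f (map h (u # w)) =
      (\<Sum>z\<in>set w. (-1) ^ index (map h w) (h z) * f (h u) (h z) * pfaff f (remove1 (h z) (map h w)))"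
    by (simp add: pfaff.simps(2) sum.reindex[OF inj])
  also have "\<dots> = (\<Sum>z\<in>set w. (-1) ^ index w z * f (h u) (h z) * pfaff (\<lambda>u v. f (h u) (h v)) (remove1 z w))"
  proof (rule sum.cong[OF refl])
    fix z assume z: "z \<in> set w"
    have "inj_on h (set (remove1 z w))" using inj by (meson inj_on_subset set_remove1_subset)
    then show "(-1) ^ index (map h w) (h z) * f (h u) (h z) * pfaff f (remove1 (h z) (map h w)) =
        (-1) ^ index w z * f (h u) (h z) * pfaff (\<lambda>u v. f (h u) (h v)) (remove1 z w)"
      using 2(1)[OF z] z inj by (simp add: index_map remove1_map)
  qed
  finally show ?case by (simp add: pfaff.simps(2))
qed simp

lemma sum_sum_Diff_swap:
  "finite R \<Longrightarrow> (\<Sum>z\<in>R. \<Sum>z'\<in>R - {z}. F z z') = (\<Sum>z'\<in>R. \<Sum>z\<in>R - {z'}. F z z')"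
proof -
  assume fin: "finite R"
  have "R - {z} = {z'\<in>R. z \<noteq> z'}" "R - {z} = {z'\<in>R. z' \<noteq> z}" for z by auto
  then show ?thesis
    using sum.swap_restrict[OF fin fin, of F "\<lambda>z z'. z \<noteq> z'"] by simp
qed

lemma pfaff_Cons_Cons:
  assumes "distinct (a # b # r)"
  shows "pfaff f (a # b # r) = f a b * pfaff f r +
    (\<Sum>z\<in>set r. \<Sum>z'\<in>set r - {z}. (-1) ^ (Suc (index r z) + index (remove1 z r) z')
       * (f a z * f b z' * pfaff f (remove1 z' (remove1 z r))))"
proof -
  have "pfaff f (a # b # r) = f a b * pfaff f r +
      (\<Sum>z\<in>set r. (-1) ^ Suc (index r z) * f a z * pfaff f (remove1 z (b # r)))"
    using assms by (simp add: pfaff.simps(2) sum.insert_remove)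
      (intro sum.cong; auto)
  also have "(\<Sum>z\<in>set r. (-1) ^ Suc (index r z) * f a z * pfaff f (remove1 z (b # r))) =
      (\<Sum>z\<in>set r. \<Sum>z'\<in>set r - {z}. (-1) ^ (Suc (index r z) + index (remove1 z r) z')
       * (f a z * f b z' * pfaff f (remove1 z' (remove1 z r))))"
    using assms by (intro sum.cong refl)
      (auto simp: pfaff.simps(2) sum_distrib_left power_add mult_ac sum_negf)
  finally show ?thesis .
qed

lemma pfaff_swap_first_two:
  fixes f :: "'a \<Rightarrow> 'a \<Rightarrow> 'r::comm_ring_1"
  assumes anti: "\<forall>u v. f u v = - f v u" and d: "distinct (x # y # r)"
  shows "pfaff f (x # y # r) = - pfaff f (y # x # r)"
proof -
  define s where "s z z' = (-1::'r) ^ (Suc (index r z) + index (remove1 z r) z')" for z z'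
  have s_anti: "s z' z = - s z z'" if "z \<in> set r" "z' \<in> set r" "z \<noteq> z'" for z z'
  proof -
    have "distinct r" using d by simp
    moreover have "index r z \<noteq> index r z'" using that inj_on_index[of r] by (auto simp: inj_on_def)
    ultimately show ?thesis
      using index_remove1[of r z z'] index_remove1[of r z' z] that
      by (cases "index r z < index r z'") (auto simp: s_def power_add power_Suc_less_one)
  qed
  have "(\<Sum>z\<in>set r. \<Sum>z'\<in>set r - {z}. s z z' * (f y z * f x z' * pfaff f (remove1 z' (remove1 z r)))) =
      (\<Sum>z'\<in>set r. \<Sum>z\<in>set r - {z'}. s z z' * (f y z * f x z' * pfaff f (remove1 z' (remove1 z r))))"
    by (rule sum_sum_Diff_swap) simp
  also have "\<dots> = (\<Sum>z\<in>set r. \<Sum>z'\<in>set r - {z}. - (s z z' * (f x z * f y z' * pfaff f (remove1 z' (remove1 z r)))))"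
  proof (intro sum.cong refl)
    fix z z' assume "z \<in> set r" "z' \<in> set r - {z}"
    then show "s z' z * (f y z' * f x z * pfaff f (remove1 z (remove1 z' r))) =
        - (s z z' * (f x z * f y z' * pfaff f (remove1 z' (remove1 z r))))"
      using s_anti[of z z'] by (auto simp: remove1_commute[of z z'] mult_ac)
  qed
  finally show ?thesis
    using pfaff_Cons_Cons[of x y r f] pfaff_Cons_Cons[of y x r f] d anti[rule_format, of y x]
    by (auto simp: s_def sum_negf)
qed

lemma pfaff_swap_adjacent:
  fixes f :: "'a \<Rightarrow> 'a \<Rightarrow> 'r::comm_ring_1"
  assumes anti: "\<forall>u v. f u v = - f v u"
  shows "distinct (l @ x # y # r) \<Longrightarrow> pfaff f (l @ x # y # r) = - pfaff f (l @ y # x # r)"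
proof (induction "length l" arbitrary: l r rule: less_induct)
  case less
  show ?case
  proof (cases l)
    case Nil
    then show ?thesis using pfaff_swap_first_two[OF anti] less.prems by simp
  next
    case (Cons c l')
    define w1 where "w1 = l' @ x # y # r"
    define w2 where "w2 = l' @ y # x # r"
    have dw: "distinct (c # w1)" using less.prems Cons by (simp add: w1_def)
    have "pfaff f (c # w2) = (\<Sum>z\<in>set w1. (-1) ^ index w2 z * f c z * pfaff f (remove1 z w2))"
      by (simp add: pfaff.simps(2) w1_def w2_def insert_commute)
    also have "\<dots> = (\<Sum>z\<in>set w1. - ((-1) ^ index w1 z * f c z * pfaff f (remove1 z w1)))"
    proof (rule sum.cong[OF refl])
      fix z assume z: "z \<in> set w1"
      consider "z \<in> set l'" | "z = x \<or> z = y" | "z \<in> set r" using z by (auto simp: w1_def)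
      then show "(-1) ^ index w2 z * f c z * pfaff f (remove1 z w2) =
          - ((-1) ^ index w1 z * f c z * pfaff f (remove1 z w1))"
      proof cases
        case 1
        have "length (remove1 z l') < length l" using Cons 1 by (simp add: length_remove1)
        moreover have "distinct (remove1 z l' @ x # y # r)" using dw by (auto simp: w1_def)
        ultimately have "pfaff f (remove1 z l' @ x # y # r) = - pfaff f (remove1 z l' @ y # x # r)"
          using less.hyps by blast
        then show ?thesis using 1 dw by (simp add: w1_def w2_def index_append remove1_append)
      next
        case 2
        then show ?thesis using dw by (auto simp: w1_def w2_def index_append remove1_append)
      next
        case 3
        have "distinct (l' @ x # y # remove1 z r)" using dw by (auto simp: w1_def)
        then have "pfaff f (l' @ x # y # remove1 z r) = - pfaff f (l' @ y # x # remove1 z r)"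
          using less.hyps Cons by simp
        then show ?thesis using 3 dw by (auto simp: w1_def w2_def index_append remove1_append)
      qed
    qed
    also have "\<dots> = - pfaff f (c # w1)"
      by (simp add: pfaff.simps(2) sum_negf)
    finally show ?thesis using Cons by (simp add: w1_def w2_def)
  qed
qed

lemma pfaff_move_to_front:
  fixes f :: "'a \<Rightarrow> 'a \<Rightarrow> 'r::comm_ring_1"
  assumes anti: "\<forall>u v. f u v = - f v u"
  shows "distinct (pre @ l @ z # r) \<Longrightarrow>
    pfaff f (pre @ l @ z # r) = (-1) ^ length l * pfaff f (pre @ z # l @ r)"
proof (induction l arbitrary: r rule: rev_induct)
  case (snoc v l')
  have "pfaff f ((pre @ l') @ v # z # r) = - pfaff f ((pre @ l') @ z # v # r)"
    using pfaff_swap_adjacent[OF anti, of "pre @ l'" v z r] snoc.prems by simp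
  also have "pfaff f ((pre @ l') @ z # v # r) = (-1) ^ length l' * pfaff f (pre @ z # l' @ v # r)"
    using snoc.IH[of "v # r"] snoc.prems by auto
  finally show ?case by simp
qed simp

section \<open>Signs of rearrangements\<close>

definition distinct_perm :: "'a list \<Rightarrow> 'a list \<Rightarrow> bool" where
  "distinct_perm a c \<longleftrightarrow> distinct a \<and> distinct c \<and> set c = set a"

definition rearr_perm :: "'a list \<Rightarrow> 'a list \<Rightarrow> nat \<Rightarrow> nat" where
  "rearr_perm a c = (\<lambda>i. if i < length a then index a (c ! i) else i)"

lemma distinct_perm_length: "distinct_perm a c \<Longrightarrow> length c = length a"
  unfolding distinct_perm_def by (metis distinct_card)

lemma rearr_sign_eq_sign:
  assumes "distinct_perm a c"
  shows "rearr_sign a c = sign (rearr_perm a c)"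
proof -
  have len: "length c = length a" using distinct_perm_length[OF assms] .
  have da: "distinct a" and sc: "set c = set a" using assms by (auto simp: distinct_perm_def)
  have "(THE j. j < length a \<and> a ! j = c ! i) = index a (c ! i)" if i: "i < length a" for i
  proof (rule the_equality)
    have "c ! i \<in> set a" using i len sc by (metis nth_mem)
    then show "index a (c ! i) < length a \<and> a ! index a (c ! i) = c ! i"
      by (simp add: index_less_length nth_index)
  next
    fix j assume "j < length a \<and> a ! j = c ! i"
    then show "j = index a (c ! i)" using index_nth[OF da] by metis
  qed
  then show ?thesis by (simp add: rearr_sign_def rearr_perm_def cong: if_cong)
qed

lemma rearr_perm_permutes:
  assumes "distinct_perm a c"
  shows "rearr_perm a c permutes {..<length a}"
proof (rule bij_imp_permutes)
  have len: "length c = length a" using distinct_perm_length[OF assms] .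
  have dc: "distinct c" and sc: "set c = set a" using assms by (auto simp: distinct_perm_def)
  have inj: "inj_on (rearr_perm a c) {..<length a}"
  proof (rule inj_onI)
    fix i j assume i: "i \<in> {..<length a}" and j: "j \<in> {..<length a}"
      and e: "rearr_perm a c i = rearr_perm a c j"
    have "c ! i \<in> set a" "c ! j \<in> set a" using i j len sc by (metis lessThan_iff nth_mem)+
    then have "c ! i = c ! j" using e i j inj_on_index[of a] by (simp add: rearr_perm_def inj_on_def)
    then show "i = j" using dc i j len by (simp add: nth_eq_iff_index_eq)
  qed
  moreover have "rearr_perm a c ` {..<length a} \<subseteq> {..<length a}"
  proof
    fix y assume "y \<in> rearr_perm a c ` {..<length a}"
    then obtain i where i: "i < length a" "y = rearr_perm a c i" by auto
    then have "c ! i \<in> set a" using len sc by (metis nth_mem)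
    then show "y \<in> {..<length a}" using i by (simp add: rearr_perm_def index_less_length)
  qed
  ultimately show "bij_betw (rearr_perm a c) {..<length a} {..<length a}"
    unfolding bij_betw_def using endo_inj_surj[of "{..<length a}"] by simp
  show "i \<notin> {..<length a} \<Longrightarrow> rearr_perm a c i = i" for i by (simp add: rearr_perm_def)
qed

lemma rearr_sign_self: "distinct a \<Longrightarrow> rearr_sign a a = 1"
proof -
  assume da: "distinct a"
  then have "rearr_perm a a = id" by (auto simp: rearr_perm_def index_nth)
  then show ?thesis using rearr_sign_eq_sign[of a a] da by (simp add: distinct_perm_def)
qed

lemma rearr_sign_swap_adjacent:
  assumes "distinct_perm a (l @ x # y # r)"
  shows "rearr_sign a (l @ x # y # r) = - rearr_sign a (l @ y # x # r)"
proof -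
  define c1 where "c1 = l @ x # y # r"
  define c2 where "c2 = l @ y # x # r"
  define k where "k = length l"
  have ok1: "distinct_perm a c1" using assms by (simp add: c1_def)
  have ok2: "distinct_perm a c2" using assms by (auto simp: c2_def distinct_perm_def)
  have kl: "Suc k < length a" using distinct_perm_length[OF ok1] by (simp add: c1_def k_def)
  have nth: "c2 ! i = c1 ! (Transposition.transpose k (Suc k) i)" for i
  proof -
    consider "i < k" | "i = k" | "i = Suc k" | m where "i = Suc (Suc k) + m"
      by (metis add_Suc less_Suc_eq less_iff_Suc_add linorder_neqE_nat)
    then show ?thesis by cases (simp_all add: c1_def c2_def k_def nth_append transpose_def)
  qed
  have "rearr_perm a c2 = rearr_perm a c1 \<circ> Transposition.transpose k (Suc k)"
    using kl by (auto simp: rearr_perm_def nth transpose_def)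
  moreover have "permutation (rearr_perm a c1)"
    using rearr_perm_permutes[OF ok1] permutation_permutes by blast
  ultimately have "sign (rearr_perm a c2) = - sign (rearr_perm a c1)"
    by (simp add: sign_compose permutation_swap_id sign_swap_id)
  then show ?thesis using rearr_sign_eq_sign[OF ok1] rearr_sign_eq_sign[OF ok2]
    by (simp add: c1_def c2_def)
qed

lemma rearr_sign_move_to_front:
  "distinct_perm a (pre @ l @ z # r) \<Longrightarrow>
    rearr_sign a (pre @ l @ z # r) = (-1) ^ length l * rearr_sign a (pre @ z # l @ r)"
proof (induction l arbitrary: r rule: rev_induct)
  case (snoc v l')
  have "rearr_sign a ((pre @ l') @ v # z # r) = - rearr_sign a ((pre @ l') @ z # v # r)"
    using rearr_sign_swap_adjacent[of a "pre @ l'" v z r] snoc.prems by simp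
  also have "rearr_sign a ((pre @ l') @ z # v # r) = (-1) ^ length l' * rearr_sign a (pre @ z # l' @ v # r)"
    using snoc.IH[of "v # r"] snoc.prems by (auto simp: distinct_perm_def)
  finally show ?case by simp
qed simp

lemma rearr_sign_rearrange_suffix:
  "distinct_perm a (pre @ c) \<Longrightarrow> distinct b \<Longrightarrow> set b = set c \<Longrightarrow>
   rearr_sign a (pre @ c) = rearr_sign b c * rearr_sign a (pre @ b)"
proof (induction b arbitrary: a pre c)
  case Nil
  then show ?case by (simp add: rearr_sign_self)
next
  case (Cons h b')
  have "h \<in> set c" using Cons.prems by auto
  then obtain l r where c: "c = l @ h # r" by (meson split_list)
  have dc: "distinct c" using Cons.prems by (simp add: distinct_perm_def)
  have sb': "set b' = set (l @ r)" using Cons.prems dc c by auto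
  have e1: "rearr_sign a (pre @ l @ h # r) = (-1) ^ length l * rearr_sign a (pre @ h # l @ r)"
    using rearr_sign_move_to_front[of a pre l h r] Cons.prems(1) c by simp
  have e2: "rearr_sign (h # b') (l @ h # r) = (-1) ^ length l * rearr_sign (h # b') (h # l @ r)"
    using rearr_sign_move_to_front[of "h # b'" "[]"] Cons.prems c by (auto simp: distinct_perm_def)
  have ok3: "distinct_perm a ((pre @ [h]) @ (l @ r))" using Cons.prems c by (auto simp: distinct_perm_def)
  have e3: "rearr_sign a ((pre @ [h]) @ l @ r) = rearr_sign b' (l @ r) * rearr_sign a ((pre @ [h]) @ b')"
    using Cons.IH[OF ok3] Cons.prems(2) sb' by simp
  have ok4: "distinct_perm (h # b') ([h] @ (l @ r))" using Cons.prems c dc by (auto simp: distinct_perm_def)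
  have e4: "rearr_sign (h # b') ([h] @ l @ r) = rearr_sign b' (l @ r) * rearr_sign (h # b') ([h] @ b')"
    using Cons.IH[OF ok4] Cons.prems(2) sb' by simp
  have "rearr_sign (h # b') ([h] @ b') = 1" using Cons.prems by (simp add: rearr_sign_self)
  then show ?case using e1 e2 e3 e4 c by simp
qed

lemma rearr_sign_map:
  assumes "distinct_perm a c" "inj_on h (set a)"
  shows "rearr_sign (map h a) (map h c) = rearr_sign a c"
proof -
  have ok: "distinct_perm (map h a) (map h c)"
    using assms by (auto simp: distinct_perm_def distinct_map inj_on_subset)
  have len: "length c = length a" using distinct_perm_length[OF assms(1)] .
  have "rearr_perm (map h a) (map h c) = rearr_perm a c"
  proof
    fix i
    show "rearr_perm (map h a) (map h c) i = rearr_perm a c i"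
    proof (cases "i < length a")
      case True
      then have "c ! i \<in> set a" using len assms(1) by (metis nth_mem distinct_perm_def)
      then show ?thesis using True len assms(2) by (simp add: rearr_perm_def index_map)
    qed (simp add: rearr_perm_def)
  qed
  then show ?thesis using rearr_sign_eq_sign[OF ok] rearr_sign_eq_sign[OF assms(1)] by simp
qed

section \<open>Agreement with the definition by pairings\<close>

lemma before_iff_index:
  assumes "distinct a"
  shows "before a p q \<longleftrightarrow> p \<in> set a \<and> q \<in> set a \<and> index a p < index a q"
proof
  assume "before a p q"
  then obtain i j where "i < j" "j < length a" "a ! i = p" "a ! j = q" by (auto simp: before_def)
  then show "p \<in> set a \<and> q \<in> set a \<and> index a p < index a q"
    using index_nth[OF assms] by (metis nth_mem order.strict_trans)
next
  assume "p \<in> set a \<and> q \<in> set a \<and> index a p < index a q"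
  then show "before a p q" unfolding before_def by (metis index_less_length nth_index)
qed

lemma finite_pairings: "finite (pairings a)"
proof (rule finite_subset)
  show "pairings a \<subseteq> {ys. set ys \<subseteq> set a \<and> length ys = length a}"
    by (auto simp: pairings_def)
  show "finite {ys. set ys \<subseteq> set a \<and> length ys = length a}"
    by (rule finite_lists_length_eq) simp
qed

lemma pairings_Nil: "pairings [] = {[]}"
  by (auto simp: pairings_def)

lemma ssign_pairing: "distinct a \<Longrightarrow> ys \<in> pairings a \<Longrightarrow> ssign a ys = rearr_sign a ys"
  by (auto simp: ssign_def pairings_def wdel_def filter_empty_conv)

lemma pairing_hd:
  assumes da: "distinct (u # w)" and ys: "ys \<in> pairings (u # w)"
  shows "ys ! 0 = u"
proof -
  define K where "K i = index (u # w) (ys ! i)" for i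
  have c1: "K (2*i) < K (2*i+1)" if "2*i+1 < length ys" for i
    using ys that da by (auto simp: pairings_def K_def before_iff_index)
  have c2: "K (2*i) < K (2*i+2)" if "2*i+2 < length ys" for i
    using ys that da by (auto simp: pairings_def K_def before_iff_index)
  have ev: "K 0 \<le> K (2*i)" if "2*i < length ys" for i
    using that
  proof (induction i)
    case (Suc i)
    then show ?case using c2[of i] by simp
  qed simp
  have K0: "K 0 \<le> K m" if "m < length ys" for m
  proof (cases "even m")
    case True
    then show ?thesis using ev that by (metis evenE)
  next
    case False
    then obtain i where "m = 2*i+1" using oddE by blast
    then show ?thesis using ev[of i] c1[of i] that by simp
  qed
  have sy: "set ys = set (u # w)" using ys by (simp add: pairings_def)
  then obtain m where m: "m < length ys" "ys ! m = u" by (metis in_set_conv_nth list.set_intros(1))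
  then have "K 0 = 0" using K0[OF m(1)] by (simp add: K_def)
  moreover have "ys ! 0 \<in> set (u # w)" using m sy by (metis gr_zeroI less_nat_zero_code nth_mem)
  ultimately show ?thesis using nth_index[of "ys ! 0" "u # w"] by (simp add: K_def)
qed

lemma before_remove1:
  assumes da: "distinct (u # w)" and z: "z \<in> set w"
    and p: "p \<in> set (remove1 z w)" and q: "q \<in> set (remove1 z w)"
  shows "before (remove1 z w) p q \<longleftrightarrow> before (u # w) p q"
proof -
  have dw: "distinct w" using da by simp
  have pw: "p \<in> set w" "p \<noteq> z" and qw: "q \<in> set w" "q \<noteq> z" using p q dw by auto
  have "index w p \<noteq> index w z" "index w q \<noteq> index w z"
    using pw qw z inj_on_index[of w] by (auto simp: inj_on_def)
  then show ?thesis
    using index_remove1[OF dw z pw] index_remove1[OF dw z qw] da p q pw qw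
    by (auto simp: before_iff_index)
qed

lemma pairings_Cons_dest:
  assumes da: "distinct (u # w)" and ys: "ys \<in> pairings (u # w)" and wn: "w \<noteq> []"
  shows "\<exists>z ys'. ys = u # z # ys' \<and> z \<in> set w \<and> ys' \<in> pairings (remove1 z w)"
proof -
  have len: "length ys = Suc (length w)" and sy: "set ys = set (u # w)" and dy: "distinct ys"
    using ys by (auto simp: pairings_def)
  obtain z ys' where y: "ys = u # z # ys'"
    using len wn pairing_hd[OF da ys] by (cases ys rule: remdups_adj.cases) auto
  have zw: "z \<in> set w" using y sy dy by auto
  have sy': "set ys' = set (remove1 z w)" using sy dy y da by auto
  have "ys' \<in> pairings (remove1 z w)"
    unfolding pairings_def
  proof (intro CollectI conjI allI impI)
    show "distinct ys'" using dy y by simp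
    show "set ys' = set (remove1 z w)" using sy' .
    show "length ys' = length (remove1 z w)" using len y zw by (simp add: length_remove1)
  next
    fix i assume i: "2*i+1 < length ys'"
    then have "before (u # w) (ys' ! (2*i)) (ys' ! (2*i+1))"
      using ys y by (auto simp: pairings_def dest: spec[of _ "Suc i"])
    moreover have "ys' ! (2*i) \<in> set (remove1 z w)" "ys' ! (2*i+1) \<in> set (remove1 z w)"
      using sy' i by (auto simp flip: sy')
    ultimately show "before (remove1 z w) (ys' ! (2*i)) (ys' ! (2*i+1))"
      using before_remove1[OF da zw] by blast
  next
    fix i assume i: "2*i+2 < length ys'"
    then have "before (u # w) (ys' ! (2*i)) (ys' ! (2*i+2))"
      using ys y by (auto simp: pairings_def dest: spec[of _ "Suc i"])
    moreover have "ys' ! (2*i) \<in> set (remove1 z w)" "ys' ! (2*i+2) \<in> set (remove1 z w)"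
      using sy' i by (auto simp flip: sy')
    ultimately show "before (remove1 z w) (ys' ! (2*i)) (ys' ! (2*i+2))"
      using before_remove1[OF da zw] by blast
  qed
  then show ?thesis using y zw by blast
qed

lemma pairings_Cons_intro:
  assumes da: "distinct (u # w)" and zw: "z \<in> set w" and ys': "ys' \<in> pairings (remove1 z w)"
  shows "u # z # ys' \<in> pairings (u # w)"
proof -
  have dy: "distinct ys'" and sy': "set ys' = set (remove1 z w)" and ly: "length ys' = length (remove1 z w)"
   and c1: "\<And>i. 2*i+1 < length ys' \<Longrightarrow> before (remove1 z w) (ys' ! (2*i)) (ys' ! (2*i+1))"
   and c2: "\<And>i. 2*i+2 < length ys' \<Longrightarrow> before (remove1 z w) (ys' ! (2*i)) (ys' ! (2*i+2))"
    using ys' by (auto simp: pairings_def)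
  have sy: "set ys' = set w - {z}" using sy' da by simp
  have bu: "before (u # w) u v" if "v \<in> set w" for v
    using that da by (auto simp: before_iff_index)
  have br: "before (u # w) (ys' ! i) (ys' ! j)"
    if "before (remove1 z w) (ys' ! i) (ys' ! j)" "i < length ys'" "j < length ys'" for i j
  proof -
    have "ys' ! i \<in> set (remove1 z w)" "ys' ! j \<in> set (remove1 z w)"
      unfolding sy'[symmetric] using that(2,3) by simp_all
    then show ?thesis using that(1) before_remove1[OF da zw] by blast
  qed
  show ?thesis
    unfolding pairings_def
  proof (intro CollectI conjI allI impI)
    show "distinct (u # z # ys')" using dy sy da zw by auto
    show "set (u # z # ys') = set (u # w)" using sy zw by auto
    show "length (u # z # ys') = length (u # w)"
      using ly zw by (simp add: length_remove1) (metis Suc_pred length_pos_if_in_set)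
  next
    fix i assume i: "2*i+1 < length (u # z # ys')"
    show "before (u # w) ((u # z # ys') ! (2*i)) ((u # z # ys') ! (2*i+1))"
    proof (cases i)
      case 0
      then show ?thesis using bu zw by simp
    next
      case (Suc j)
      then show ?thesis using c1[of j] br[of "2*j" "2*j+1"] i by simp
    qed
  next
    fix i assume i: "2*i+2 < length (u # z # ys')"
    show "before (u # w) ((u # z # ys') ! (2*i)) ((u # z # ys') ! (2*i+2))"
    proof (cases i)
      case 0
      then have "ys' ! 0 \<in> set ys'" using i by simp
      then have "ys' ! 0 \<in> set w" using sy by blast
      then show ?thesis using bu 0 by simp
    next
      case (Suc j)
      then show ?thesis using c2[of j] br[of "2*j" "2*j+2"] i by simp
    qed
  qed
qed

lemma bij_betw_pairings_Cons:
  assumes "distinct (u # w)" "w \<noteq> []"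
  shows "bij_betw (\<lambda>(z, ys'). u # z # ys') (SIGMA z:set w. pairings (remove1 z w)) (pairings (u # w))"
  unfolding bij_betw_def
proof
  show "inj_on (\<lambda>(z, ys'). u # z # ys') (SIGMA z:set w. pairings (remove1 z w))"
    by (auto simp: inj_on_def)
  show "(\<lambda>(z, ys'). u # z # ys') ` (SIGMA z:set w. pairings (remove1 z w)) = pairings (u # w)"
    using pairings_Cons_intro[OF assms(1)] pairings_Cons_dest[OF assms(1) _ assms(2)] by fastforce
qed

lemma rearr_sign_Cons_pairing:
  assumes da: "distinct (u # w)" and zw: "z \<in> set w" and ys': "ys' \<in> pairings (remove1 z w)"
  shows "rearr_sign (u # w) (u # z # ys') = (-1) ^ index w z * rearr_sign (remove1 z w) ys'"
proof -
  obtain l r where w: "w = l @ z # r" using zw by (meson split_list)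
  have zl: "z \<notin> set l" using da w by simp
  have rem: "remove1 z w = l @ r" and iz: "index w z = length l"
    using w zl by (simp_all add: remove1_append index_append)
  have sy: "set ys' = set (remove1 z w)" and dy: "distinct ys'" using ys' by (auto simp: pairings_def)
  have "distinct_perm (u # w) ([u, z] @ ys')" using sy dy da zw by (auto simp: distinct_perm_def)
  moreover have "distinct (l @ r)" using da rem by (metis distinct.simps(2) distinct_remove1)
  ultimately have "rearr_sign (u # w) ([u, z] @ ys') = rearr_sign (remove1 z w) ys' * rearr_sign (u # w) ([u, z] @ l @ r)"
    using rearr_sign_rearrange_suffix[of "u # w" "[u, z]" ys' "remove1 z w"] sy da rem by simp
  moreover have "rearr_sign (u # w) (u # w) = (-1) ^ length l * rearr_sign (u # w) (u # z # l @ r)"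
    using rearr_sign_move_to_front[of "u # w" "[u]" l z r] da w by (simp add: distinct_perm_def)
  then have "rearr_sign (u # w) (u # z # l @ r) = (-1) ^ length l"
    using rearr_sign_self[OF da] by (metis left_minus_one_mult_self mult.right_neutral)
  ultimately show ?thesis using iz by (simp add: mult.commute)
qed

lemma pf_Cons:
  fixes f :: "'a \<Rightarrow> 'a \<Rightarrow> 'r::comm_ring_1"
  assumes da: "distinct (u # w)" and ev: "even (length (u # w))"
  shows "pf f (u # w) = (\<Sum>z\<in>set w. (-1) ^ index w z * f u z * pf f (remove1 z w))"
proof -
  define G where "G a ys = of_int (ssign a ys) * (\<Prod>i<length a div 2. f (ys ! (2*i)) (ys ! (2*i+1)))"
    for a ys :: "'a list"
  have pf_G: "pf f a = (\<Sum>ys\<in>pairings a. G a ys)" if "distinct a" "even (length a)" for a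
    using that by (simp add: pf_def G_def)
  have G_Cons: "G (u # w) (u # z # ys') = (-1) ^ index w z * f u z * G (remove1 z w) ys'"
    if zw: "z \<in> set w" and ys': "ys' \<in> pairings (remove1 z w)" for z ys'
  proof -
    have dr: "distinct (remove1 z w)" using da by simp
    have div: "length (u # w) div 2 = Suc (length (remove1 z w) div 2)"
      using zw ev by (cases w) (auto simp: length_remove1)
    have "(\<Prod>i<length (u # w) div 2. f ((u # z # ys') ! (2*i)) ((u # z # ys') ! (2*i+1))) =
        f u z * (\<Prod>i<length (remove1 z w) div 2. f (ys' ! (2*i)) (ys' ! (2*i+1)))"
      unfolding div prod.lessThan_Suc_shift by simp
    moreover have "ssign (u # w) (u # z # ys') = (-1) ^ index w z * ssign (remove1 z w) ys'"
      using ssign_pairing[OF da pairings_Cons_intro[OF da zw ys']] ssign_pairing[OF dr ys']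
        rearr_sign_Cons_pairing[OF da zw ys'] by simp
    ultimately show ?thesis by (simp add: G_def prod.lessThan_Suc_shift mult_ac)
  qed
  have "w \<noteq> []" using ev by auto
  have "pf f (u # w) = (\<Sum>ys\<in>pairings (u # w). G (u # w) ys)"
    using pf_G[OF da ev] .
  also have "\<dots> = (\<Sum>(z, ys')\<in>(SIGMA z:set w. pairings (remove1 z w)). G (u # w) (u # z # ys'))"
    using sum.reindex_bij_betw[OF bij_betw_pairings_Cons[OF da \<open>w \<noteq> []\<close>], of "G (u # w)"]
    by (simp add: case_prod_unfold)
  also have "\<dots> = (\<Sum>z\<in>set w. (-1) ^ index w z * f u z * (\<Sum>ys'\<in>pairings (remove1 z w). G (remove1 z w) ys'))"
    by (subst sum.Sigma[symmetric]) (auto simp: finite_pairings G_Cons sum_distrib_left intro!: sum.cong)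
  also have "\<dots> = (\<Sum>z\<in>set w. (-1) ^ index w z * f u z * pf f (remove1 z w))"
    using da ev by (intro sum.cong refl) (simp add: pf_G length_remove1)
  finally show ?thesis .
qed

lemma pf_eq_pfaff: "distinct w \<Longrightarrow> pf f w = pfaff f w"
proof (induction "length w" arbitrary: w rule: less_induct)
  case less
  show ?case
  proof (cases w)
    case Nil
    then show ?thesis by (simp add: pf_def pairings_Nil ssign_def wdel_def rearr_sign_self)
  next
    case (Cons u w')
    show ?thesis
    proof (cases "even (length w)")
      case False
      then show ?thesis using pfaff_odd_length by (simp add: pf_def)
    next
      case True
      have "pf f (remove1 z w') = pfaff f (remove1 z w')" if "z \<in> set w'" for z
        using less that Cons by (simp add: length_remove1)
      then show ?thesis
        using pf_Cons[of u w' f] less.prems True Cons by (simp add: pfaff.simps(2))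
    qed
  qed
qed

section \<open>Pfaffians of finite subsets of a linear order\<close>

definition rank :: "'a::linorder set \<Rightarrow> 'a \<Rightarrow> nat" where
  "rank S i = card {s\<in>S. s < i}"

definition rank_sign :: "'a::linorder set \<Rightarrow> 'a \<Rightarrow> int" where
  "rank_sign S i = (-1) ^ rank S i"

definition sign_less :: "'a::linorder \<Rightarrow> 'a \<Rightarrow> int" where
  "sign_less a i = (if a < i then -1 else 1)"

definition pfaff_set :: "('a::linorder \<Rightarrow> 'a \<Rightarrow> 'r::comm_ring_1) \<Rightarrow> 'a set \<Rightarrow> 'r" where
  "pfaff_set g S = pfaff g (sorted_list_of_set S)"

lemma rank_sign_mult_self [simp]: "rank_sign S i * rank_sign S i = 1"
  by (simp add: rank_sign_def)

lemma of_rank_sign_mult_self [simp]: "(of_int (rank_sign S i) :: 'r::comm_ring_1) * of_int (rank_sign S i) = 1"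
  by (metis of_int_1 of_int_mult rank_sign_mult_self)

lemma sign_less_mult_self [simp]: "sign_less a i * sign_less a i = 1"
  by (simp add: sign_less_def)

lemma sign_less_swap: "a \<noteq> i \<Longrightarrow> sign_less i a = - sign_less a i"
  by (auto simp: sign_less_def)

lemma rank_remove_self [simp]: "rank (S - {z}) z = rank S z"
  unfolding rank_def by (rule arg_cong[where f = card]) auto

lemma rank_insert_self [simp]: "rank (insert z S) z = rank S z"
  unfolding rank_def by (rule arg_cong[where f = card]) auto

lemma rank_sign_remove_self [simp]: "rank_sign (S - {z}) z = rank_sign S z"
  and rank_sign_insert_self [simp]: "rank_sign (insert z S) z = rank_sign S z"
  by (simp_all add: rank_sign_def)

lemma rank_sign_remove:
  assumes "finite S" "p \<in> S"
  shows "rank_sign (S - {p}) i = rank_sign S i * sign_less p i"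
proof -
  have "{s\<in>S. s < i} = (if p < i then insert p {s\<in>S - {p}. s < i} else {s\<in>S - {p}. s < i})"
    using assms(2) by auto
  then have "rank S i = rank (S - {p}) i + (if p < i then 1 else 0)"
    using assms(1) by (simp add: rank_def)
  then show ?thesis by (simp add: rank_sign_def sign_less_def)
qed

lemma rank_sign_insert: "finite S \<Longrightarrow> p \<notin> S \<Longrightarrow> rank_sign (insert p S) i = rank_sign S i * sign_less p i"
  using rank_sign_remove[of "insert p S" p i] by (simp add: mult.assoc)

lemma rank_sign_toggle: "finite S \<Longrightarrow> rank_sign (sym_diff S {p}) i = rank_sign S i * sign_less p i"
  by (cases "p \<in> S") (simp_all add: rank_sign_remove rank_sign_insert insert_absorb Un_commute)

lemma sorted_list_of_set_insert_split:
  assumes fin: "finite S" and z: "z \<notin> S"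
  obtains l r where "sorted_list_of_set S = l @ r" "sorted_list_of_set (insert z S) = l @ z # r"
    "length l = rank S z"
proof -
  define L where "L = sorted_list_of_set (insert z S)"
  have sL: "set L = insert z S" and dL: "distinct L" and stL: "sorted_wrt (<) L"
    using fin by (simp_all add: L_def strict_sorted_list_of_set del: sorted_list_of_set_insert_remove)
  obtain l r where L: "L = l @ z # r" using sL by (metis insertI1 split_list)
  have zl: "z \<notin> set l" using dL L by simp
  have "sorted_list_of_set S = sorted_list_of_set (insert z S - {z})" using z by simp
  also have "\<dots> = remove1 z L" unfolding L_def using fin by (simp add: sorted_list_of_set_remove)
  also have "\<dots> = l @ r" using L zl by (simp add: remove1_append)
  finally have rest: "sorted_list_of_set S = l @ r" .
  have "{s\<in>S. s < z} = set l"
  proof -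
    have "\<forall>x\<in>set l. x < z" "\<forall>y\<in>set r. z < y" using stL L by (auto simp: sorted_wrt_append)
    then show ?thesis using sL L zl by fastforce
  qed
  then have "length l = rank S z" using dL L by (simp add: rank_def distinct_card)
  moreover have "sorted_list_of_set (insert z S) = l @ z # r" using L unfolding L_def .
  ultimately show ?thesis using rest that by simp
qed

lemma index_sorted_list_of_set:
  assumes "finite S" "z \<in> S"
  shows "index (sorted_list_of_set S) z = rank S z"
proof -
  obtain l r where lr: "sorted_list_of_set (S - {z}) = l @ r"
    "sorted_list_of_set (insert z (S - {z})) = l @ z # r" "length l = rank (S - {z}) z"
    using sorted_list_of_set_insert_split[of "S - {z}" z] assms by auto
  then have "sorted_list_of_set S = l @ z # r" using assms(2) by (simp add: insert_absorb)
  moreover have "z \<notin> set l" using calculation distinct_sorted_list_of_set[of S] by auto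
  ultimately show ?thesis using lr by (simp add: index_append)
qed

lemma pfaff_insert_sorted:
  fixes g :: "'a::linorder \<Rightarrow> 'a \<Rightarrow> 'r::comm_ring_1"
  assumes anti: "\<forall>u v. g u v = - g v u"
    and fin: "finite S" and z: "z \<notin> S" and d: "distinct (pre @ z # sorted_list_of_set S)"
  shows "pfaff g (pre @ z # sorted_list_of_set S) =
    of_int (rank_sign S z) * pfaff g (pre @ sorted_list_of_set (insert z S))"
proof -
  obtain l r where lr: "sorted_list_of_set S = l @ r" "sorted_list_of_set (insert z S) = l @ z # r"
    "length l = rank S z"
    using sorted_list_of_set_insert_split[OF fin z] .
  have "pfaff g (pre @ l @ z # r) = (-1) ^ length l * pfaff g (pre @ z # l @ r)"
    using pfaff_move_to_front[OF anti] d lr by simp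
  then show ?thesis using lr by (simp add: rank_sign_def)
qed

lemma rearr_sign_insert_sorted:
  assumes fin: "finite S" and z: "z \<notin> S" and ok: "distinct_perm a (pre @ z # sorted_list_of_set S)"
  shows "rearr_sign a (pre @ z # sorted_list_of_set S) =
    rank_sign S z * rearr_sign a (pre @ sorted_list_of_set (insert z S))"
proof -
  obtain l r where lr: "sorted_list_of_set S = l @ r" "sorted_list_of_set (insert z S) = l @ z # r"
    "length l = rank S z"
    using sorted_list_of_set_insert_split[OF fin z] .
  have "rearr_sign a (pre @ l @ z # r) = (-1) ^ length l * rearr_sign a (pre @ z # l @ r)"
    using rearr_sign_move_to_front[of a pre l z r] ok lr by (simp add: distinct_perm_def)
  then show ?thesis using lr by (simp add: rank_sign_def)
qed

lemma pfaff_set_expand: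
  fixes g :: "'a::linorder \<Rightarrow> 'a \<Rightarrow> 'r::comm_ring_1"
  assumes anti: "\<forall>u v. g u v = - g v u" and fin: "finite V" and u: "u \<in> V"
  shows "pfaff_set g V = (\<Sum>z\<in>V - {u}.
    of_int (rank_sign V u * rank_sign (V - {u}) z) * g u z * pfaff_set g (V - {u} - {z}))"
proof -
  define W where "W = V - {u}"
  have finW: "finite W" and uW: "u \<notin> W" and VW: "insert u W = V"
    using fin u by (auto simp: W_def)
  have "pfaff g (u # sorted_list_of_set W) = of_int (rank_sign W u) * pfaff_set g V"
    using pfaff_insert_sorted[OF anti finW uW, of "[]"] finW uW VW by (simp add: pfaff_set_def)
  then have e: "pfaff_set g V = of_int (rank_sign V u) * pfaff g (u # sorted_list_of_set W)"
    by (simp add: W_def mult.assoc[symmetric])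
  have "pfaff g (u # sorted_list_of_set W) =
      (\<Sum>z\<in>W. of_int (rank_sign W z) * g u z * pfaff_set g (W - {z}))"
    using finW by (simp add: pfaff.simps(2) index_sorted_list_of_set rank_sign_def pfaff_set_def
        sorted_list_of_set_remove)
  then show ?thesis using e by (simp add: W_def sum_distrib_left mult.assoc)
qed

section \<open>The Pfaffian Plucker relation\<close>

definition plucker_term ::
    "('a::linorder \<Rightarrow> 'a \<Rightarrow> 'r::comm_ring_1) \<Rightarrow> 'a set \<Rightarrow> 'a set \<Rightarrow> 'a \<Rightarrow> 'r"
  where
  "plucker_term g S T i = of_int (rank_sign S i * rank_sign T i)
     * pfaff_set g (sym_diff S {i}) * pfaff_set g (sym_diff T {i})"

definition plucker_sum ::
    "('a::linorder \<Rightarrow> 'a \<Rightarrow> 'r::comm_ring_1) \<Rightarrow> 'a set \<Rightarrow> 'a set \<Rightarrow> 'r"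
  where
  "plucker_sum g S T = (\<Sum>i\<in>sym_diff S T. plucker_term g S T i)"

text \<open>The coefficient of g u z when the i-th Plucker term is expanded along u: the Pfaffian of
  T \<triangle> {i} is expanded if i = u, and that of S \<triangle> {i} otherwise.\<close>
definition plucker_coeff ::
    "('a::linorder \<Rightarrow> 'a \<Rightarrow> 'r::comm_ring_1) \<Rightarrow> 'a set \<Rightarrow> 'a set \<Rightarrow> 'a \<Rightarrow> 'a \<Rightarrow> 'a \<Rightarrow> 'r"
  where
  "plucker_coeff g S T u i z =
    (if i = u then
       (if z \<in> T then of_int (rank_sign S u * rank_sign T z) * pfaff_set g (S - {u}) * pfaff_set g (T - {z})
        else 0)
     else if z \<in> sym_diff S {i} then
       of_int (rank_sign S i * rank_sign T i * rank_sign (sym_diff S {i}) u * rank_sign (sym_diff S {i} - {u}) z)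
         * pfaff_set g (sym_diff S {i} - {u} - {z}) * pfaff_set g (sym_diff T {i})
     else 0)"

lemma plucker_sum_commute: "plucker_sum g S T = plucker_sum g T S"
  unfolding plucker_sum_def plucker_term_def by (simp add: Un_commute mult_ac)

lemma plucker_term_expand:
  fixes g :: "'a::linorder \<Rightarrow> 'a \<Rightarrow> 'r::comm_ring_1"
  assumes anti: "\<forall>u v. g u v = - g v u" and finS: "finite S" and finT: "finite T"
    and uS: "u \<in> S" and uT: "u \<notin> T" and i: "i \<in> sym_diff S T"
  shows "plucker_term g S T i = (\<Sum>z\<in>(S \<union> T) - {u}. g u z * plucker_coeff g S T u i z)"
proof (cases "i = u")
  case True
  have "pfaff_set g (insert u T) =
      (\<Sum>z\<in>T. of_int (rank_sign T u * rank_sign T z) * g u z * pfaff_set g (T - {z}))"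
    using pfaff_set_expand[OF anti, of "insert u T" u] finT uT by simp
  then have "plucker_term g S T i =
      (\<Sum>z\<in>T. g u z * (of_int (rank_sign S u * rank_sign T z) * pfaff_set g (S - {u}) * pfaff_set g (T - {z})))"
    using True uS uT
    by (simp add: plucker_term_def insert_absorb sum_distrib_left mult_ac flip: of_int_mult)
  also have "\<dots> = (\<Sum>z\<in>(S \<union> T) - {u}. g u z * plucker_coeff g S T u i z)"
    using finS finT uT True
    by (intro sum.mono_neutral_cong_left) (auto simp: plucker_coeff_def)
  finally show ?thesis .
next
  case False
  define V where "V = sym_diff S {i}"
  have fV: "finite V" and uV: "u \<in> V" and VW: "V - {u} \<subseteq> (S \<union> T) - {u}"
    using finS uS False i by (auto simp: V_def)
  have "plucker_term g S T i = (\<Sum>z\<in>V - {u}. g u z * (of_int (rank_sign S i * rank_sign T i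
      * rank_sign V u * rank_sign (V - {u}) z) * pfaff_set g (V - {u} - {z}) * pfaff_set g (sym_diff T {i})))"
    using pfaff_set_expand[OF anti fV uV]
    by (simp add: plucker_term_def V_def sum_distrib_left sum_distrib_right mult_ac)
  also have "\<dots> = (\<Sum>z\<in>(S \<union> T) - {u}. g u z * plucker_coeff g S T u i z)"
    using finS finT VW False
    by (intro sum.mono_neutral_cong_left) (auto simp: plucker_coeff_def V_def)
  finally show ?thesis .
qed

lemma plucker_coeff_contract:
  assumes finS: "finite S" and uS: "u \<in> S" and zS: "z \<in> S" and zu: "z \<noteq> u"
    and iu: "i \<noteq> u" and iz: "i \<noteq> z"
  shows "plucker_coeff g S T u i z =
    of_int (rank_sign S u * rank_sign (S - {u}) z) * plucker_term g (S - {u} - {z}) T i"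
proof -
  have toggle_u: "sym_diff S {i} - {u} = sym_diff (S - {u}) {i}" using iu by auto
  have "rank_sign (sym_diff S {i}) u = rank_sign S u * sign_less i u"
    using finS by (rule rank_sign_toggle)
  moreover have "rank_sign (sym_diff S {i} - {u}) z = rank_sign (S - {u}) z * sign_less i z"
    unfolding toggle_u using finS by (simp add: rank_sign_toggle)
  moreover have "rank_sign (S - {u} - {z}) i = rank_sign S i * sign_less u i * sign_less z i"
    using finS uS zS zu by (simp add: rank_sign_remove)
  ultimately have sign: "rank_sign S i * rank_sign T i * rank_sign (sym_diff S {i}) u
      * rank_sign (sym_diff S {i} - {u}) z
    = rank_sign S u * rank_sign (S - {u}) z * (rank_sign (S - {u} - {z}) i * rank_sign T i)"
    using sign_less_swap[of u i] sign_less_swap[of z i] iu iz by (simp add: mult_ac)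
  have "sym_diff S {i} - {u} - {z} = sym_diff (S - {u} - {z}) {i}" using iu iz by auto
  then show ?thesis
    using zS iz iu unfolding plucker_coeff_def plucker_term_def sign by (simp add: mult_ac)
qed

lemma plucker_coeff_cancel:
  assumes finS: "finite S" and uS: "u \<in> S" and zT: "z \<in> T" and zS: "z \<notin> S"
  shows "plucker_coeff g S T u u z + plucker_coeff g S T u z z = 0"
proof -
  have zu: "z \<noteq> u" using uS zS by auto
  have "rank_sign (insert z S) u = rank_sign S u * sign_less z u"
    using finS zS by (rule rank_sign_insert)
  moreover have "rank_sign (insert z S - {u}) z = rank_sign S z * sign_less u z"
    using finS uS zu by (simp add: insert_Diff_if rank_sign_remove)
  ultimately have sign: "rank_sign S z * rank_sign T z * rank_sign (insert z S) u * rank_sign (insert z S - {u}) z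
      = - (rank_sign S u * rank_sign T z)"
    using sign_less_swap[of u z] zu by (simp add: mult_ac)
  have "insert z S - {u} - {z} = S - {u}" "sym_diff T {z} = T - {z}" "sym_diff S {z} = insert z S"
    using zS zT by auto
  then have "plucker_coeff g S T u z z = of_int (rank_sign S z * rank_sign T z * rank_sign (insert z S) u
      * rank_sign (insert z S - {u}) z) * pfaff_set g (S - {u}) * pfaff_set g (T - {z})"
    using zS zu by (simp add: plucker_coeff_def del: of_int_mult)
  then show ?thesis
    using zT unfolding sign by (simp add: plucker_coeff_def)
qed

lemma sum_plucker_coeff_eq_0:
  fixes g :: "'a::linorder \<Rightarrow> 'a \<Rightarrow> 'r::comm_ring_1"
  assumes finS: "finite S" and finT: "finite T" and uS: "u \<in> S" and uT: "u \<notin> T"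
    and z: "z \<in> (S \<union> T) - {u}"
    and IH: "z \<in> S \<Longrightarrow> plucker_sum g (S - {u} - {z}) T = 0"
  shows "(\<Sum>i\<in>sym_diff S T. plucker_coeff g S T u i z) = 0"
proof -
  define D where "D = sym_diff S T"
  define S' where "S' = S - {u} - {z}"
  define K where "K = rank_sign S u * rank_sign (S - {u}) z"
  have finD: "finite D" using finS finT by (simp add: D_def)
  have uD: "u \<in> D" using uS uT by (simp add: D_def)
  have zu: "z \<noteq> u" using z by simp
  have contract: "(\<Sum>i\<in>I. plucker_coeff g S T u i z) = of_int K * (\<Sum>i\<in>I. plucker_term g S' T i)"
    if "z \<in> S" "u \<notin> I" "z \<notin> I" for I
  proof -
    have "plucker_coeff g S T u i z = of_int K * plucker_term g S' T i" if "i \<in> I" for i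
      using plucker_coeff_contract[OF finS uS _ zu] that \<open>z \<in> S\<close> \<open>u \<notin> I\<close> \<open>z \<notin> I\<close>
      by (metis K_def S'_def)
    then show ?thesis by (simp add: sum_distrib_left)
  qed
  consider "z \<in> S" "z \<notin> T" | "z \<in> S" "z \<in> T" | "z \<notin> S" "z \<in> T" using z by auto
  then show ?thesis
  proof cases
    case 1
    have "(\<Sum>i\<in>D. plucker_coeff g S T u i z) = (\<Sum>i\<in>D - {u, z}. plucker_coeff g S T u i z)"
      using finD 1 by (intro sum.mono_neutral_right) (auto simp: plucker_coeff_def)
    also have "\<dots> = of_int K * plucker_sum g S' T"
      using 1 uS uT
      by (subst contract) (auto simp: plucker_sum_def D_def S'_def intro!: arg_cong2[where f = "(*)"] sum.cong)
    finally show ?thesis using IH 1 by (simp add: D_def S'_def)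
  next
    case 2
    have "plucker_coeff g S T u u z = of_int K * plucker_term g S' T z"
      using 2 uT zu by (simp add: plucker_coeff_def plucker_term_def K_def S'_def insert_absorb mult_ac)
    moreover have "sym_diff S' T = insert z (D - {u})" using 2 uS uT by (auto simp: D_def S'_def)
    moreover have "z \<notin> D" using 2 by (simp add: D_def)
    ultimately have "(\<Sum>i\<in>D. plucker_coeff g S T u i z) = of_int K * plucker_sum g S' T"
      using finD 2 by (simp add: sum.remove[OF finD uD] plucker_sum_def contract distrib_left)
    then show ?thesis using IH 2 by (simp add: S'_def D_def)
  next
    case 3
    have "(\<Sum>i\<in>D. plucker_coeff g S T u i z) = (\<Sum>i\<in>{u, z}. plucker_coeff g S T u i z)"
      using finD 3 uD by (intro sum.mono_neutral_right) (auto simp: plucker_coeff_def D_def)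
    then show ?thesis using plucker_coeff_cancel[OF finS uS 3(2,1)] zu by (simp add: D_def)
  qed
qed

lemma plucker_sum_step:
  fixes g :: "'a::linorder \<Rightarrow> 'a \<Rightarrow> 'r::comm_ring_1"
  assumes anti: "\<forall>u v. g u v = - g v u" and finS: "finite S" and finT: "finite T"
    and uS: "u \<in> S" and uT: "u \<notin> T"
    and IH: "\<And>z. z \<in> S - {u} \<Longrightarrow> plucker_sum g (S - {u} - {z}) T = 0"
  shows "plucker_sum g S T = 0"
proof -
  have "plucker_sum g S T = (\<Sum>i\<in>sym_diff S T. \<Sum>z\<in>(S \<union> T) - {u}. g u z * plucker_coeff g S T u i z)"
    unfolding plucker_sum_def using plucker_term_expand[OF anti finS finT uS uT] by (intro sum.cong) auto
  also have "\<dots> = (\<Sum>z\<in>(S \<union> T) - {u}. g u z * (\<Sum>i\<in>sym_diff S T. plucker_coeff g S T u i z))"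
    by (subst sum.swap) (simp add: sum_distrib_left)
  also have "\<dots> = 0"
  proof (intro sum.neutral ballI)
    fix z assume "z \<in> (S \<union> T) - {u}"
    then have "(\<Sum>i\<in>sym_diff S T. plucker_coeff g S T u i z) = 0"
      using IH by (intro sum_plucker_coeff_eq_0[OF finS finT uS uT]) auto
    then show "g u z * (\<Sum>i\<in>sym_diff S T. plucker_coeff g S T u i z) = 0" by simp
  qed
  finally show ?thesis .
qed

theorem plucker_sum_eq_0:
  fixes g :: "'a::linorder \<Rightarrow> 'a \<Rightarrow> 'r::comm_ring_1"
  assumes anti: "\<forall>u v. g u v = - g v u"
  shows "finite S \<Longrightarrow> finite T \<Longrightarrow> plucker_sum g S T = 0"
proof (induction "card S + card T" arbitrary: S T rule: less_induct)
  case less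
  have smaller: "card (X - {u} - {z}) < card X" if "finite X" "u \<in> X" for X u z
    using that by (meson Diff_subset card_Diff1_less card_mono finite_Diff le_less_trans)
  consider u where "u \<in> S" "u \<notin> T" | u where "u \<in> T" "u \<notin> S" | "S = T" by blast
  then show ?case
  proof cases
    case 1
    show ?thesis
    proof (rule plucker_sum_step[OF anti less.prems 1])
      fix z assume "z \<in> S - {u}"
      then show "plucker_sum g (S - {u} - {z}) T = 0"
        using less.hyps[of "S - {u} - {z}" T] less.prems smaller[of S u z] 1 by simp
    qed
  next
    case 2
    have "plucker_sum g T S = 0"
    proof (rule plucker_sum_step[OF anti less.prems(2,1) 2])
      fix z assume "z \<in> T - {u}"
      then show "plucker_sum g (T - {u} - {z}) S = 0"
        using less.hyps[of S "T - {u} - {z}"] less.prems smaller[of T u z] 2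
        by (simp add: plucker_sum_commute)
    qed
    then show ?thesis by (simp add: plucker_sum_commute)
  next
    case 3
    then show ?thesis by (simp add: plucker_sum_def)
  qed
qed

section \<open>Strictly increasing words\<close>

declare sorted_list_of_set_insert [simp del] sorted_list_of_set_insert_remove [simp del]

lemma sorted_list_of_set_set_strict_sorted: "sorted_wrt (<) w \<Longrightarrow> sorted_list_of_set (set w) = w"
  by (rule strict_sorted_equal) (simp_all add: strict_sorted_list_of_set)

lemma pf_strict_sorted: "sorted_wrt (<) w \<Longrightarrow> pf f w = pfaff_set f (set w)"
  by (simp add: pf_eq_pfaff strict_sorted_iff pfaff_set_def sorted_list_of_set_set_strict_sorted)

lemma wdel_strict_sorted:
  "sorted_wrt (<) w \<Longrightarrow> wdel w d = sorted_list_of_set (set w - set d)"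
  by (rule strict_sorted_equal[symmetric]) (auto simp: wdel_def sorted_wrt_filter strict_sorted_list_of_set)

lemma ssign_strict_sorted_single:
  assumes w: "sorted_wrt (<) w" and x: "x \<in> set w"
  shows "ssign w [x] = rank_sign (set w) x"
proof -
  have dw: "distinct w" using w by (simp add: strict_sorted_iff)
  have "ssign w [x] = rearr_sign w ([] @ x # sorted_list_of_set (set w - {x}))"
    using dw x w by (simp add: ssign_def wdel_strict_sorted)
  also have "\<dots> = rank_sign (set w - {x}) x * rearr_sign w ([] @ sorted_list_of_set (insert x (set w - {x})))"
    using dw x by (intro rearr_sign_insert_sorted) (auto simp: distinct_perm_def)
  finally show ?thesis
    using x w dw by (simp add: insert_absorb sorted_list_of_set_set_strict_sorted rearr_sign_self)
qed

lemma ssign_strict_sorted_pair: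
  assumes w: "sorted_wrt (<) w" and xy: "x \<in> set w" "y \<in> set w" "x \<noteq> y"
  shows "ssign w [x, y] = rank_sign (set w) x * rank_sign (set w - {x}) y"
proof -
  have dw: "distinct w" using w by (simp add: strict_sorted_iff)
  have "ssign w [x, y] = rearr_sign w ([x] @ y # sorted_list_of_set (set w - {x} - {y}))"
    using dw xy w by (simp add: ssign_def wdel_strict_sorted Diff_insert[symmetric] insert_commute)
  also have "\<dots> = rank_sign (set w - {x} - {y}) y
      * rearr_sign w ([x] @ sorted_list_of_set (insert y (set w - {x} - {y})))"
    using dw xy by (intro rearr_sign_insert_sorted) (auto simp: distinct_perm_def)
  also have "insert y (set w - {x} - {y}) = set w - {x}" using xy by auto
  also have "rearr_sign w ([x] @ sorted_list_of_set (set w - {x})) =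
      rank_sign (set w - {x}) x * rearr_sign w (sorted_list_of_set (set w))"
    using dw xy rearr_sign_insert_sorted[of "set w - {x}" x w "[]"]
    by (simp add: distinct_perm_def insert_absorb)
  finally show ?thesis
    using xy w dw by (simp add: sorted_list_of_set_set_strict_sorted rearr_sign_self)
qed

lemma pf_insert_strict_sorted:
  fixes f :: "'a::linorder \<Rightarrow> 'a \<Rightarrow> 'r::comm_ring_1"
  assumes anti: "\<forall>u v. f u v = - f v u" and sorted: "sorted_wrt (<) (pre @ w)"
    and z: "z \<notin> set (pre @ w)" and pre: "\<forall>p\<in>set pre. p < z"
  shows "pf f (pre @ z # w) = of_int (rank_sign (set w) z) * pfaff_set f (insert z (set (pre @ w)))"
proof -
  have w: "sorted_wrt (<) w" and sl: "sorted_list_of_set (set w) = w"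
    using sorted by (simp_all add: sorted_wrt_append sorted_list_of_set_set_strict_sorted)
  have "pf f (pre @ z # w) = pfaff f (pre @ z # sorted_list_of_set (set w))"
    using sorted z by (simp add: pf_eq_pfaff strict_sorted_iff sl)
  also have "\<dots> = of_int (rank_sign (set w) z) * pfaff f (pre @ sorted_list_of_set (insert z (set w)))"
    using sorted z by (intro pfaff_insert_sorted[OF anti]) (auto simp: sl strict_sorted_iff)
  also have "pfaff f (pre @ sorted_list_of_set (insert z (set w))) = pfaff_set f (insert z (set (pre @ w)))"
  proof -
    have "sorted_wrt (<) (pre @ sorted_list_of_set (insert z (set w)))"
      using sorted pre
      by (auto simp: sorted_wrt_append strict_sorted_list_of_set)
    then have "sorted_list_of_set (set (pre @ sorted_list_of_set (insert z (set w)))) =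
        pre @ sorted_list_of_set (insert z (set w))"
      by (rule sorted_list_of_set_set_strict_sorted)
    then show ?thesis by (simp add: pfaff_set_def)
  qed
  finally show ?thesis .
qed

lemma pf_append_pair_strict_sorted:
  fixes f :: "'a::linorder \<Rightarrow> 'a \<Rightarrow> 'r::comm_ring_1"
  assumes anti: "\<forall>u v. f u v = - f v u" and w: "sorted_wrt (<) w"
    and xy: "x \<notin> set w" "y \<notin> set w" "x \<noteq> y"
  shows "pf f (w @ [x, y]) = of_int (rank_sign (set w) y * rank_sign (insert y (set w)) x)
    * pfaff_set f (insert x (insert y (set w)))"
proof -
  have dw: "distinct w" and sl: "sorted_list_of_set (set w) = w"
    using w by (simp_all add: strict_sorted_iff sorted_list_of_set_set_strict_sorted)
  have "pfaff f ((w @ [x]) @ y # []) = (-1) ^ Suc (length w) * pfaff f (y # w @ [x])"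
    using pfaff_move_to_front[OF anti, of "[]" "w @ [x]" y "[]"] dw xy by simp
  moreover have "pfaff f ([y] @ w @ x # []) = (-1) ^ length w * pfaff f ([y] @ x # w)"
    using pfaff_move_to_front[OF anti, of "[y]" w x "[]"] dw xy by simp
  moreover have "pfaff f ([] @ y # x # w) = - pfaff f ([] @ x # y # w)"
    using pfaff_swap_adjacent[OF anti, of "[]" y x w] dw xy by simp
  ultimately have "pf f (w @ [x, y]) = pfaff f ([x] @ y # sorted_list_of_set (set w))"
    using dw xy by (simp add: pf_eq_pfaff sl)
  also have "\<dots> = of_int (rank_sign (set w) y) * pfaff f ([x] @ sorted_list_of_set (insert y (set w)))"
    using dw xy by (intro pfaff_insert_sorted[OF anti]) auto
  also have "pfaff f ([x] @ sorted_list_of_set (insert y (set w))) =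
      of_int (rank_sign (insert y (set w)) x) * pfaff_set f (insert x (insert y (set w)))"
    using dw xy pfaff_insert_sorted[OF anti, of "insert y (set w)" x "[]"]
    by (simp add: pfaff_set_def)
  finally show ?thesis by (simp add: mult.assoc)
qed

section \<open>The exchange identity\<close>

lemma rank_sign_Un:
  "finite X \<Longrightarrow> finite Y \<Longrightarrow> X \<inter> Y = {} \<Longrightarrow> rank_sign (X \<union> Y) i = rank_sign X i * rank_sign Y i"
proof -
  assume "finite X" "finite Y" "X \<inter> Y = {}"
  moreover have "{s\<in>X \<union> Y. s < i} = {s\<in>X. s < i} \<union> {s\<in>Y. s < i}" by auto
  ultimately show ?thesis by (simp add: rank_sign_def rank_def card_Un_disjoint disjoint_iff power_add)
qed

lemma rank_sign_less_all: "\<forall>x\<in>X. x < i \<Longrightarrow> rank_sign X i = (-1) ^ card X"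
proof -
  assume "\<forall>x\<in>X. x < i"
  then have "{s\<in>X. s < i} = X" by blast
  then show ?thesis by (simp add: rank_sign_def rank_def)
qed

lemma rank_sign_le_all: "\<forall>x\<in>X. i \<le> x \<Longrightarrow> rank_sign X i = 1"
proof -
  assume "\<forall>x\<in>X. i \<le> x"
  then have "{s\<in>X. s < i} = {}" by (auto simp: not_less[symmetric])
  then have "rank X i = 0" unfolding rank_def by (simp only: card.empty)
  then show ?thesis by (simp add: rank_sign_def)
qed

lemma exchange_term_same_block:
  fixes f :: "'a::linorder \<Rightarrow> 'a \<Rightarrow> 'r::comm_ring_1"
  assumes anti: "\<forall>u v. f u v = - f v u" and sorted: "sorted_wrt (<) (\<alpha> @ \<beta> @ \<gamma>)"
    and i: "i \<in> set \<beta>" and j: "j \<in> set \<beta>" "j \<noteq> i"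
  shows "of_int (ssign \<beta> [i, j]) * pf f (wdel (\<alpha> @ \<beta>) [i, j]) * pf f (\<alpha> @ \<gamma> @ [i, j]) =
    - of_int (rank_sign (set \<beta>) i) * plucker_term f (set (\<alpha> @ \<beta>) - {i}) (insert i (set (\<alpha> @ \<gamma>))) j"
proof -
  define A B C where "A = set \<alpha>" and "B = set \<beta>" and "C = set \<gamma>"
  have sorted_parts: "sorted_wrt (<) \<beta>" "sorted_wrt (<) (\<alpha> @ \<beta>)" "sorted_wrt (<) (\<alpha> @ \<gamma>)"
    and AB: "\<forall>a\<in>A. \<forall>b\<in>B. a < b" and AC: "\<forall>a\<in>A. \<forall>c\<in>C. a < c" and BC: "\<forall>b\<in>B. \<forall>c\<in>C. b < c"
    using sorted by (auto simp: sorted_wrt_append A_def B_def C_def)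
  have fin: "finite A" "finite B" "finite C" by (simp_all add: A_def B_def C_def)
  have sets: "set (\<alpha> @ \<beta>) = A \<union> B" "set (\<alpha> @ \<gamma>) = A \<union> C" "set \<beta> = B"
    by (simp_all add: A_def B_def C_def)
  have ij: "i \<in> B" "j \<in> B" "i \<notin> A" "i \<notin> C" "j \<notin> A" "j \<notin> C"
    using i j AB BC by (auto simp: B_def)
  have disj: "A \<inter> C = {}" "A \<inter> B = {}" using AB AC by fastforce+
  have A_sign: "rank_sign A k = (-1) ^ card A" and C_sign: "rank_sign C k = 1" if "k \<in> B" for k
    using that AB BC by (simp_all add: rank_sign_less_all rank_sign_le_all less_imp_le)
  have "ssign \<beta> [i, j] = rank_sign B i * (rank_sign B j * sign_less i j)"
    using ssign_strict_sorted_pair[OF sorted_parts(1) i j(1)] j fin ij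
    by (simp add: B_def rank_sign_remove)
  moreover have "pf f (wdel (\<alpha> @ \<beta>) [i, j]) = pfaff_set f (sym_diff (A \<union> B - {i}) {j})"
  proof -
    have "sym_diff (A \<union> B - {i}) {j} = set (\<alpha> @ \<beta>) - set [i, j]" using ij j by (auto simp: A_def B_def)
    then show ?thesis using sorted_parts(2)
      by (simp add: wdel_strict_sorted pf_strict_sorted strict_sorted_list_of_set)
  qed
  moreover have "pf f (\<alpha> @ \<gamma> @ [i, j]) = of_int (rank_sign (A \<union> C) j * rank_sign (insert j (A \<union> C)) i)
      * pfaff_set f (sym_diff (insert i (A \<union> C)) {j})"
  proof -
    have "sym_diff (insert i (A \<union> C)) {j} = insert i (insert j (set (\<alpha> @ \<gamma>)))"
      using ij j by (auto simp: A_def C_def)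
    then show ?thesis
      using pf_append_pair_strict_sorted[OF anti sorted_parts(3), of i j] ij j by (simp add: A_def C_def)
  qed
  moreover have "rank_sign (insert j (A \<union> C)) i = (-1) ^ card A * sign_less j i"
    using fin ij disj by (simp add: rank_sign_insert rank_sign_Un A_sign C_sign)
  moreover have "rank_sign (A \<union> B - {i}) j = (-1) ^ card A * (rank_sign B j * sign_less i j)"
    using fin ij disj by (simp add: rank_sign_remove rank_sign_Un A_sign)
  moreover have "rank_sign (insert i (A \<union> C)) j = (-1) ^ card A * sign_less i j"
    using fin ij disj by (simp add: rank_sign_insert rank_sign_Un A_sign C_sign)
  moreover have "rank_sign (A \<union> C) j = (-1) ^ card A"
    using fin ij disj by (simp add: rank_sign_Un A_sign C_sign)
  moreover have "sign_less j i = - sign_less i j" using j by (intro sign_less_swap) simp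
  ultimately show ?thesis
    unfolding sets plucker_term_def by (cases "i < j") (simp_all add: sign_less_def mult_ac)
qed

lemma exchange_term_other_block:
  fixes f :: "'a::linorder \<Rightarrow> 'a \<Rightarrow> 'r::comm_ring_1"
  assumes anti: "\<forall>u v. f u v = - f v u" and sorted: "sorted_wrt (<) (\<alpha> @ \<beta> @ \<gamma>)"
    and i: "i \<in> set \<beta>" and j: "j \<in> set \<gamma>"
  shows "of_int (ssign \<beta> [i]) * of_int (ssign \<gamma> [j]) * pf f (\<alpha> @ [j] @ wdel \<beta> [i])
      * pf f (\<alpha> @ [i] @ wdel \<gamma> [j]) =
    - of_int (rank_sign (set \<beta>) i) * plucker_term f (set (\<alpha> @ \<beta>) - {i}) (insert i (set (\<alpha> @ \<gamma>))) j"
proof -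
  define A B C where "A = set \<alpha>" and "B = set \<beta>" and "C = set \<gamma>"
  have sorted_parts: "sorted_wrt (<) \<beta>" "sorted_wrt (<) \<gamma>"
      "sorted_wrt (<) (\<alpha> @ wdel \<beta> [i])" "sorted_wrt (<) (\<alpha> @ wdel \<gamma> [j])"
    and AB: "\<forall>a\<in>A. \<forall>b\<in>B. a < b" and AC: "\<forall>a\<in>A. \<forall>c\<in>C. a < c" and BC: "\<forall>b\<in>B. \<forall>c\<in>C. b < c"
    using sorted by (auto simp: sorted_wrt_append sorted_wrt_filter wdel_def A_def B_def C_def)
  have fin: "finite A" "finite B" "finite C" by (simp_all add: A_def B_def C_def)
  have sets: "set (\<alpha> @ \<beta>) = A \<union> B" "set (\<alpha> @ \<gamma>) = A \<union> C" "set \<beta> = B" "set \<gamma> = C"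
    "set (wdel \<beta> [i]) = B - {i}" "set (wdel \<gamma> [j]) = C - {j}"
    by (auto simp: A_def B_def C_def wdel_def)
  have ij: "i \<in> B" "j \<in> C" "i \<notin> A" "i \<notin> C" "j \<notin> A" "j \<notin> B" "i < j"
    using i j AB AC BC by (auto simp: B_def C_def)
  have disj: "A \<inter> C = {}" "A \<inter> B = {}" using AB AC by fastforce+
  have "ssign \<beta> [i] = rank_sign B i" "ssign \<gamma> [j] = rank_sign C j"
    using ssign_strict_sorted_single[OF sorted_parts(1) i] ssign_strict_sorted_single[OF sorted_parts(2) j]
    by (simp_all add: B_def C_def)
  moreover have "pf f (\<alpha> @ [j] @ wdel \<beta> [i]) =
      of_int (rank_sign (B - {i}) j) * pfaff_set f (sym_diff (A \<union> B - {i}) {j})"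
  proof -
    have "sym_diff (A \<union> B - {i}) {j} = insert j (set (\<alpha> @ wdel \<beta> [i]))"
      using ij sets by auto
    then show ?thesis
      using pf_insert_strict_sorted[OF anti sorted_parts(3), of j] ij AC sets by (simp add: A_def)
  qed
  moreover have "pf f (\<alpha> @ [i] @ wdel \<gamma> [j]) =
      of_int (rank_sign (C - {j}) i) * pfaff_set f (sym_diff (insert i (A \<union> C)) {j})"
  proof -
    have "sym_diff (insert i (A \<union> C)) {j} = insert i (set (\<alpha> @ wdel \<gamma> [j]))"
      using ij sets by auto
    then show ?thesis
      using pf_insert_strict_sorted[OF anti sorted_parts(4), of i] ij AB sets by (simp add: A_def)
  qed
  moreover have "rank_sign (B - {i}) j = (-1) ^ card B * sign_less i j"
    using rank_sign_remove[OF fin(2) ij(1), of j] rank_sign_less_all[of B j] BC ij by simp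
  moreover have "rank_sign (C - {j}) i = 1"
    using BC ij by (intro rank_sign_le_all) (auto simp: less_imp_le)
  moreover have "rank_sign (A \<union> B - {i}) j = (-1) ^ card A * ((-1) ^ card B * sign_less i j)"
    using fin ij disj AC BC by (simp add: rank_sign_remove rank_sign_Un rank_sign_less_all)
  moreover have "rank_sign (insert i (A \<union> C)) j = (-1) ^ card A * (rank_sign C j * sign_less i j)"
    using fin ij disj AC by (simp add: rank_sign_insert rank_sign_Un rank_sign_less_all)
  ultimately show ?thesis
    using ij unfolding sets plucker_term_def by (simp add: sign_less_def mult_ac)
qed

definition exchange_identity ::
    "('a \<Rightarrow> 'a \<Rightarrow> 'r::comm_ring_1) \<Rightarrow> 'a list \<Rightarrow> 'a list \<Rightarrow> 'a list \<Rightarrow> 'a \<Rightarrow> bool"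
  where
  "exchange_identity f \<alpha> \<beta> \<gamma> x \<longleftrightarrow>
     pf f (\<alpha> @ \<beta>) * pf f (\<alpha> @ \<gamma>) =
       (\<Sum>y\<in>set \<beta>. of_int (ssign \<beta> [x, y]) * pf f (wdel (\<alpha> @ \<beta>) [x, y]) * pf f (\<alpha> @ \<gamma> @ [x, y]))
     + (\<Sum>y\<in>set \<gamma>. of_int (ssign \<beta> [x]) * of_int (ssign \<gamma> [y])
          * pf f (\<alpha> @ [y] @ wdel \<beta> [x]) * pf f (\<alpha> @ [x] @ wdel \<gamma> [y]))"

lemma plucker_relation_blocks:
  fixes f :: "'a::linorder \<Rightarrow> 'a \<Rightarrow> 'r::comm_ring_1"
  assumes anti: "\<forall>u v. f u v = - f v u" and dist: "distinct (\<alpha> @ \<beta> @ \<gamma>)"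
    and i: "i \<in> set \<beta>"
  defines "S \<equiv> set (\<alpha> @ \<beta>) - {i}" and "T \<equiv> insert i (set (\<alpha> @ \<gamma>))"
  shows "plucker_term f S T i =
    - (\<Sum>j\<in>set \<beta> - {i}. plucker_term f S T j) - (\<Sum>j\<in>set \<gamma>. plucker_term f S T j)"
proof -
  have "sym_diff S T = insert i ((set \<beta> - {i}) \<union> set \<gamma>)"
    using i dist by (auto simp: S_def T_def)
  moreover have "i \<notin> set \<gamma>" "(set \<beta> - {i}) \<inter> set \<gamma> = {}" using dist i by auto
  ultimately have "plucker_sum f S T = plucker_term f S T i + ((\<Sum>j\<in>set \<beta> - {i}. plucker_term f S T j)
      + (\<Sum>j\<in>set \<gamma>. plucker_term f S T j))"
    unfolding plucker_sum_def by (simp add: sum.union_disjoint)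
  then show ?thesis
    using plucker_sum_eq_0[OF anti, of S T] by (simp add: S_def T_def eq_neg_iff_add_eq_0 algebra_simps)
qed

lemma pf_product_eq_plucker_term:
  fixes f :: "'a::linorder \<Rightarrow> 'a \<Rightarrow> 'r::comm_ring_1"
  assumes sorted: "sorted_wrt (<) (\<alpha> @ \<beta> @ \<gamma>)" and i: "i \<in> set \<beta>"
  shows "pf f (\<alpha> @ \<beta>) * pf f (\<alpha> @ \<gamma>) =
    of_int (rank_sign (set \<beta>) i) * plucker_term f (set (\<alpha> @ \<beta>) - {i}) (insert i (set (\<alpha> @ \<gamma>))) i"
proof -
  have sorted_parts: "sorted_wrt (<) (\<alpha> @ \<beta>)" "sorted_wrt (<) (\<alpha> @ \<gamma>)"
    and A: "\<forall>a\<in>set \<alpha>. a < i" and C: "\<forall>c\<in>set \<gamma>. i < c"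
    using sorted i by (auto simp: sorted_wrt_append)
  have dist: "distinct (\<alpha> @ \<beta> @ \<gamma>)" using sorted by (simp add: strict_sorted_iff)
  have "rank_sign (set (\<alpha> @ \<beta>) - {i}) i * rank_sign (insert i (set (\<alpha> @ \<gamma>))) i = rank_sign (set \<beta>) i"
  proof -
    have "rank_sign (set \<alpha> \<union> set \<beta>) i = rank_sign (set \<alpha>) i * rank_sign (set \<beta>) i"
      and "rank_sign (set \<alpha> \<union> set \<gamma>) i = rank_sign (set \<alpha>) i * rank_sign (set \<gamma>) i"
      using dist by (auto intro!: rank_sign_Un)
    moreover have "rank_sign (set \<gamma>) i = 1" using C by (auto intro: rank_sign_le_all less_imp_le)
    ultimately show ?thesis by simp
  qed
  moreover have "sym_diff (set (\<alpha> @ \<beta>) - {i}) {i} = set (\<alpha> @ \<beta>)"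
    and "sym_diff (insert i (set (\<alpha> @ \<gamma>))) {i} = set (\<alpha> @ \<gamma>)"
    using i A C by auto
  ultimately show ?thesis
    using sorted_parts by (simp add: plucker_term_def pf_strict_sorted mult.assoc[symmetric])
qed

lemma exchange_identity_sorted:
  fixes f :: "'a::linorder \<Rightarrow> 'a \<Rightarrow> 'r::comm_ring_1"
  assumes anti: "\<forall>u v. f u v = - f v u" and sorted: "sorted_wrt (<) (\<alpha> @ \<beta> @ \<gamma>)"
    and i: "i \<in> set \<beta>"
  shows "exchange_identity f \<alpha> \<beta> \<gamma> i"
proof -
  define S T where "S = set (\<alpha> @ \<beta>) - {i}" and "T = insert i (set (\<alpha> @ \<gamma>))"
  define \<epsilon> where "\<epsilon> = (of_int (rank_sign (set \<beta>) i) :: 'r)"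
  have dist: "distinct (\<alpha> @ \<beta> @ \<gamma>)" using sorted by (simp add: strict_sorted_iff)
  have "ssign \<beta> [i, i] = 0" by (simp add: ssign_def)
  then have first: "(\<Sum>y\<in>set \<beta>. of_int (ssign \<beta> [i, y]) * pf f (wdel (\<alpha> @ \<beta>) [i, y])
        * pf f (\<alpha> @ \<gamma> @ [i, y])) = - \<epsilon> * (\<Sum>j\<in>set \<beta> - {i}. plucker_term f S T j)"
    using i exchange_term_same_block[OF anti sorted i]
    by (simp add: sum.remove[of "set \<beta>" i] sum_distrib_left \<epsilon>_def S_def T_def)
  have second: "(\<Sum>y\<in>set \<gamma>. of_int (ssign \<beta> [i]) * of_int (ssign \<gamma> [y])
        * pf f (\<alpha> @ [y] @ wdel \<beta> [i]) * pf f (\<alpha> @ [i] @ wdel \<gamma> [y]))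
      = - \<epsilon> * (\<Sum>j\<in>set \<gamma>. plucker_term f S T j)"
    using exchange_term_other_block[OF anti sorted i] by (simp add: sum_distrib_left \<epsilon>_def S_def T_def)
  show ?thesis
    unfolding exchange_identity_def first second \<epsilon>_def S_def T_def
      pf_product_eq_plucker_term[OF sorted i] plucker_relation_blocks[OF anti dist i]
    by (simp add: algebra_simps)
qed

lemma set_wdel [simp]: "set (wdel a b) = set a - set b"
  by (auto simp: wdel_def)

lemma wdel_map: "inj_on h (set a \<union> set b) \<Longrightarrow> wdel (map h a) (map h b) = map h (wdel a b)"
  unfolding wdel_def filter_map by (intro arg_cong[where f = "map h"] filter_cong) (auto simp: inj_on_def)

lemma pf_map:
  assumes "inj_on h (set w)"
  shows "pf f (map h w) = pf (\<lambda>u v. f (h u) (h v)) w"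
proof (cases "distinct w")
  case True
  then show ?thesis using assms by (simp add: pf_eq_pfaff pfaff_map distinct_map)
next
  case False
  then show ?thesis using assms by (simp add: pf_def distinct_map)
qed

lemma ssign_map:
  assumes inj: "inj_on h (set a \<union> set b)"
  shows "ssign (map h a) (map h b) = ssign a b"
proof -
  have inj_a: "inj_on h (set a)" and inj_b: "inj_on h (set b)" using inj by (auto intro: inj_on_subset)
  have sub: "set (map h b) \<subseteq> set (map h a) \<longleftrightarrow> set b \<subseteq> set a"
  proof
    assume image: "set (map h b) \<subseteq> set (map h a)"
    show "set b \<subseteq> set a"
    proof
      fix y assume y: "y \<in> set b"
      then have "h y \<in> h ` set a" using image by auto
      then show "y \<in> set a" using inj_on_image_mem_iff[OF inj, of y "set a"] y by auto
    qed
  qed auto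
  show ?thesis
  proof (cases "distinct a \<and> distinct b \<and> set b \<subseteq> set a")
    case True
    then have "distinct_perm a (b @ wdel a b)" by (auto simp: distinct_perm_def wdel_def)
    then have "rearr_sign (map h a) (map h (b @ wdel a b)) = rearr_sign a (b @ wdel a b)"
      using inj_a by (rule rearr_sign_map)
    then show ?thesis using True inj_a inj_b sub by (simp add: ssign_def wdel_map[OF inj] distinct_map)
  next
    case False
    then show ?thesis using inj_a inj_b sub by (auto simp: ssign_def distinct_map)
  qed
qed

lemma sum_same_block_map:
  assumes inj: "inj_on h (set (\<alpha> @ \<beta> @ \<gamma>))" and x: "x \<in> set \<beta>"
  shows "(\<Sum>y\<in>set (map h \<beta>). of_int (ssign (map h \<beta>) [h x, y])
        * pf f (wdel (map h \<alpha> @ map h \<beta>) [h x, y]) * pf f (map h \<alpha> @ map h \<gamma> @ [h x, y])) =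
    (\<Sum>y\<in>set \<beta>. of_int (ssign \<beta> [x, y]) * pf (\<lambda>u v. f (h u) (h v)) (wdel (\<alpha> @ \<beta>) [x, y])
        * pf (\<lambda>u v. f (h u) (h v)) (\<alpha> @ \<gamma> @ [x, y]))"
proof -
  have inj_\<beta>: "inj_on h (set \<beta>)" using inj by (rule inj_on_subset) auto
  show ?thesis
    unfolding set_map sum.reindex[OF inj_\<beta>] comp_def
  proof (rule sum.cong)
    fix y assume y: "y \<in> set \<beta>"
    have inj': "inj_on h (set \<beta> \<union> set [x, y])" "inj_on h (set (\<alpha> @ \<beta>) \<union> set [x, y])"
      "inj_on h (set (wdel (\<alpha> @ \<beta>) [x, y]))" "inj_on h (set (\<alpha> @ \<gamma> @ [x, y]))"
      by (rule inj_on_subset[OF inj]; use x y in auto)+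
    show "of_int (ssign (map h \<beta>) [h x, h y]) * pf f (wdel (map h \<alpha> @ map h \<beta>) [h x, h y])
        * pf f (map h \<alpha> @ map h \<gamma> @ [h x, h y]) =
      of_int (ssign \<beta> [x, y]) * pf (\<lambda>u v. f (h u) (h v)) (wdel (\<alpha> @ \<beta>) [x, y])
        * pf (\<lambda>u v. f (h u) (h v)) (\<alpha> @ \<gamma> @ [x, y])"
      using ssign_map[OF inj'(1)] wdel_map[OF inj'(2)] pf_map[OF inj'(3), of f] pf_map[OF inj'(4), of f]
      by (simp only: map_append list.map)
  qed auto
qed

lemma sum_other_block_map:
  assumes inj: "inj_on h (set (\<alpha> @ \<beta> @ \<gamma>))" and x: "x \<in> set \<beta>"
  shows "(\<Sum>y\<in>set (map h \<gamma>). of_int (ssign (map h \<beta>) [h x]) * of_int (ssign (map h \<gamma>) [y])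
        * pf f (map h \<alpha> @ [y] @ wdel (map h \<beta>) [h x]) * pf f (map h \<alpha> @ [h x] @ wdel (map h \<gamma>) [y])) =
    (\<Sum>y\<in>set \<gamma>. of_int (ssign \<beta> [x]) * of_int (ssign \<gamma> [y])
        * pf (\<lambda>u v. f (h u) (h v)) (\<alpha> @ [y] @ wdel \<beta> [x])
        * pf (\<lambda>u v. f (h u) (h v)) (\<alpha> @ [x] @ wdel \<gamma> [y]))"
proof -
  have inj_\<gamma>: "inj_on h (set \<gamma>)" using inj by (rule inj_on_subset) auto
  show ?thesis
    unfolding set_map sum.reindex[OF inj_\<gamma>] comp_def
  proof (rule sum.cong)
    fix y assume y: "y \<in> set \<gamma>"
    have inj': "inj_on h (set \<beta> \<union> set [x])" "inj_on h (set \<gamma> \<union> set [y])"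
      "inj_on h (set (\<alpha> @ [y] @ wdel \<beta> [x]))" "inj_on h (set (\<alpha> @ [x] @ wdel \<gamma> [y]))"
      by (rule inj_on_subset[OF inj]; use x y in auto)+
    show "of_int (ssign (map h \<beta>) [h x]) * of_int (ssign (map h \<gamma>) [h y])
        * pf f (map h \<alpha> @ [h y] @ wdel (map h \<beta>) [h x]) * pf f (map h \<alpha> @ [h x] @ wdel (map h \<gamma>) [h y]) =
      of_int (ssign \<beta> [x]) * of_int (ssign \<gamma> [y])
        * pf (\<lambda>u v. f (h u) (h v)) (\<alpha> @ [y] @ wdel \<beta> [x])
        * pf (\<lambda>u v. f (h u) (h v)) (\<alpha> @ [x] @ wdel \<gamma> [y])"
      using ssign_map[OF inj'(1)] ssign_map[OF inj'(2)] wdel_map[OF inj'(1)] wdel_map[OF inj'(2)]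
        pf_map[OF inj'(3), of f] pf_map[OF inj'(4), of f]
      by (simp only: map_append list.map)
  qed auto
qed

lemma exchange_identity_map:
  assumes inj: "inj_on h (set (\<alpha> @ \<beta> @ \<gamma>))" and x: "x \<in> set \<beta>"
  shows "exchange_identity f (map h \<alpha>) (map h \<beta>) (map h \<gamma>) (h x) \<longleftrightarrow>
    exchange_identity (\<lambda>u v. f (h u) (h v)) \<alpha> \<beta> \<gamma> x"
proof -
  have "pf f (map h \<alpha> @ map h \<beta>) = pf (\<lambda>u v. f (h u) (h v)) (\<alpha> @ \<beta>)"
    and "pf f (map h \<alpha> @ map h \<gamma>) = pf (\<lambda>u v. f (h u) (h v)) (\<alpha> @ \<gamma>)"
    using pf_map[OF inj_on_subset[OF inj], of "\<alpha> @ \<beta>"] pf_map[OF inj_on_subset[OF inj], of "\<alpha> @ \<gamma>"]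
    by auto
  then show ?thesis
    unfolding exchange_identity_def sum_same_block_map[OF inj x] sum_other_block_map[OF inj x] by simp
qed

theorem mainTheorem13:
  fixes f :: "'a \<Rightarrow> 'a \<Rightarrow> 'r::comm_ring_1"
    and \<alpha> \<beta> \<gamma> :: "'a list" and x :: 'a
  assumes antisym: "\<forall>u v. f u v = - f v u"
    and diag: "\<forall>u. f u u = 0"
    and dist: "distinct (\<alpha> @ \<beta> @ \<gamma>)"
    and x_in: "x \<in> set \<beta>"
  shows "pf f (\<alpha> @ \<beta>) * pf f (\<alpha> @ \<gamma>) =
     (\<Sum>y\<in>set \<beta>. of_int (ssign \<beta> [x, y]) * pf f (wdel (\<alpha> @ \<beta>) [x, y]) * pf f (\<alpha> @ \<gamma> @ [x, y]))
   + (\<Sum>y\<in>set \<gamma>. of_int (ssign \<beta> [x]) * of_int (ssign \<gamma> [y])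
        * pf f (\<alpha> @ [y] @ wdel \<beta> [x]) * pf f (\<alpha> @ [x] @ wdel \<gamma> [y]))"
proof -
  define a b c where "a = length \<alpha>" and "b = length \<beta>" and "c = length \<gamma>"
  define h where "h = (!) (\<alpha> @ \<beta> @ \<gamma>)"
  have blocks: "map h [0..<a] = \<alpha>" "map h [a..<a + b] = \<beta>" "map h [a + b..<a + b + c] = \<gamma>"
    by (rule nth_equalityI; simp add: h_def a_def b_def c_def nth_append)+
  have inj: "inj_on h (set ([0..<a] @ [a..<a + b] @ [a + b..<a + b + c]))"
    unfolding h_def using dist by (intro inj_on_nth) (auto simp: a_def b_def c_def)
  obtain i where i: "i \<in> set [a..<a + b]" "h i = x"
    using x_in unfolding blocks(2)[symmetric] by auto
  have "exchange_identity (\<lambda>u v. f (h u) (h v)) [0..<a] [a..<a + b] [a + b..<a + b + c] i"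
  proof (rule exchange_identity_sorted)
    show "sorted_wrt (<) ([0..<a] @ [a..<a + b] @ [a + b..<a + b + c])"
      by (simp add: sorted_wrt_append ball_Un)
  qed (use antisym i(1) in blast)+
  then have "exchange_identity f (map h [0..<a]) (map h [a..<a + b]) (map h [a + b..<a + b + c]) (h i)"
    using exchange_identity_map[OF inj i(1), of f] by simp
  then show ?thesis
    unfolding blocks i(2) exchange_identity_def .
qed

end
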